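(* Let $\alpha\in\{0,1,2\}^*$ be a finite ternary string and let $c_\infty[\alpha]$ be the CQCA limit configuration on input $\alpha$. Let $e=(x_0,y_0)\in\mathbb{Z}^2$ be such that both cells $e+N$ and $e+W$ are defined in $c_\infty[\alpha]$ (an anchor cell). Then there exists $z\in\mathbb{N}$ such that: the cells $(x_0,y)$ with $y_0<y\le|\alpha|$ are all defined and give a base-$3'$ word $\gamma$ with $[\![\gamma]\!]_{3'}=z$; and the cells $(x,y_0)$ with $x<x_0$ all have defined sum bits $b_x$, only finitely many of which are $1$, with $\sum_{x<x_0}b_x\,2^{x_0-1-x}=z$ (i.e. the sum bits strictly west of $e$ on row $y_0$ form the base-2 representation of $z$, least significant bit at $e+W$).
   Context: Notation: $E=(1,0)$, $W=(-1,0)$, $N=(0,1)$, $S=(0,-1)$ in $\mathbb{Z}^2$; $[P]\in\{0,1\}$ equals $1$ iff $P$ holds. Strings are indexed from the right. Base $3'$: words over $\{0,\bar0,1,\bar1\}$ with trit values $0\mapsto0$, $\bar0\mapsto1$, $1\mapsto1$, $\bar1\mapsto2$, and $[\![\gamma]\!]_{3'}=\sum_i\mathrm{val}(\gamma_i)3^i$. The symbols $0,\bar0,1,\bar1$ are identified with the cell states $(0,0),(0,1),(1,0),(1,1)$. The encoding $\mathrm{enc}:\{0,1,2\}^*\to\{0,\bar0,1,\bar1\}^*$ acts symbol by symbol: $0\mapsto0$, $2\mapsto\bar1$, and a digit $\alpha_i=1$ maps to $1$ if there exists $j<i$ with $\alpha_j\ne1$ and the largest such $j$ has $\alpha_j=2$,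 and to $\bar0$ otherwise. A vertical contiguous segment of defined cells gives the base-$3'$ word formed by the cells' states read from north (most significant) to south (least significant). The CQCA. State set $\Sigma=\{0,1,\bot\}^2\setminus\{(\bot,0),(\bot,1)\}$; a state $(s,c)$ has sum bit $s$ and carry bit $c$; it is undefined if $(\bot,\bot)$, half-defined if $s\in\{0,1\},c=\bot$, defined if $s,c\in\{0,1\}$. One step $F(C)$ of a configuration $C:\mathbb{Z}^2\to\Sigma$: first the non-local rule gives $C'$: $C'(u)=(0,1)$ if $C(u+W)=(1,\bot)$, $C(u)\in\{(0,\bot),(\bot,\bot)\}$ and $C(u+iE)\in\{(0,\bot),(\bot,\bot)\}$ for all $i\ge1$; otherwise $C'(u)=C(u)$. Then the local rule on $C'$ at all cells simultaneously: (i) if $C'(u)=(s,\bot)$ half-defined and $C'(u+E)=(s',c')$ defined, $F(C)(u)=(s,[s+s'+c'\ge2])$; (ii) if $C'(u)=(\bot,\bot)$, $C'(u+N)=(s,\bot)$ half-defined and $C'(u+N+E)=(s',c')$ defined, $F(C)(u)=((s+s'+c')\bmod2,\bot)$; (iii) otherwise $F(C)(u)=C'(u)$. For $\alpha\in\{0,1,2\}^*$ with $\gamma=\mathrm{enc}(\alpha)$, the initial configuration $c_0[\alpha]$ is: $c_0[\alpha](0,i)=\gamma_{i-1}$ for $1\le i\le|\alpha|$, $c_0[\alpha](x,|\alpha|)=(0,\bot)$ for all $x<0$, and $(\bot,\bot)$ elsewhere. Each cell's state in $F^i(c_0[\alpha])$ is eventually constant; $c_\infty[\alpha]$ is the pointwise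 limit. *)

theory Defs
  imports Main
begin

text \<open>Cell states: pairs (sum bit, carry bit), None encoding the undefined value.
  Only the states in Sigma occur (carry defined implies sum defined).\<close>
type_synonym state = "bool option \<times> bool option"
type_synonym cell = "int \<times> int"
type_synonym config = "cell \<Rightarrow> state"

definition Sigma :: "state set" where
  "Sigma = UNIV - {(None, Some False), (None, Some True)}"

definition undef_st :: state where "undef_st = (None, None)"

definition is_defined :: "state \<Rightarrow> bool" where
  "is_defined st \<longleftrightarrow> fst st \<noteq> None \<and> snd st \<noteq> None"

definition half_defined :: "state \<Rightarrow> bool" where
  "half_defined st \<longleftrightarrow> fst st \<noteq> None \<and> snd st = None"

definition dirE :: cell where "dirE = (1, 0)"
definition dirW :: cell where "dirW = (-1, 0)"
definition dirN :: cell where "dirN = (0, 1)"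
definition dirS :: cell where "dirS = (0, -1)"

definition cadd :: "cell \<Rightarrow> cell \<Rightarrow> cell" where
  "cadd u v = (fst u + fst v, snd u + snd v)"

definition cscale :: "int \<Rightarrow> cell \<Rightarrow> cell" where
  "cscale i v = (i * fst v, i * snd v)"

definition nonlocal_step :: "config \<Rightarrow> config" where
  "nonlocal_step C u =
    (if C (cadd u dirW) = (Some True, None)
        \<and> C u \<in> {(Some False, None), (None, None)}
        \<and> (\<forall>i::int. i \<ge> 1 \<longrightarrow> C (cadd u (cscale i dirE)) \<in> {(Some False, None), (None, None)})
     then (Some False, Some True) else C u)"

definition bitn :: "bool option \<Rightarrow> nat" where
  "bitn b = (case b of Some True \<Rightarrow> 1 | _ \<Rightarrow> 0)"

definition local_step :: "config \<Rightarrow> config" where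
  "local_step C' u =
    (if half_defined (C' u) \<and> is_defined (C' (cadd u dirE)) then
       (fst (C' u),
        Some (bitn (fst (C' u)) + bitn (fst (C' (cadd u dirE))) + bitn (snd (C' (cadd u dirE))) \<ge> 2))
     else if C' u = (None, None) \<and> half_defined (C' (cadd u dirN))
             \<and> is_defined (C' (cadd (cadd u dirN) dirE)) then
       (Some (odd (bitn (fst (C' (cadd u dirN))) + bitn (fst (C' (cadd (cadd u dirN) dirE)))
                   + bitn (snd (C' (cadd (cadd u dirN) dirE))))), None)
     else C' u)"

definition F :: "config \<Rightarrow> config" where
  "F C = local_step (nonlocal_step C)"

text \<open>Strings are lists; index i counts from the right: alpha_i = alpha ! (length alpha - 1 - i).\<close>
definition rdig :: "'a list \<Rightarrow> nat \<Rightarrow> 'a" where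
  "rdig xs i = xs ! (length xs - 1 - i)"

text \<open>Encoding of a ternary digit string into base-3' symbols (as cell states):
  0 = (0,0), 0bar = (0,1), 1 = (1,0), 1bar = (1,1).\<close>
definition enc_digit :: "nat list \<Rightarrow> nat \<Rightarrow> state" where
  "enc_digit \<alpha> i =
    (if rdig \<alpha> i = 0 then (Some False, Some False)
     else if rdig \<alpha> i = 2 then (Some True, Some True)
     else if (\<exists>j<i. rdig \<alpha> j \<noteq> 1) \<and> rdig \<alpha> (GREATEST j. j < i \<and> rdig \<alpha> j \<noteq> 1) = 2
       then (Some True, Some False)
       else (Some False, Some True))"

definition c0 :: "nat list \<Rightarrow> config" where
  "c0 \<alpha> u =
    (if fst u = 0 \<and> 1 \<le> snd u \<and> snd u \<le> int (length \<alpha>) then enc_digit \<alpha> (nat (snd u - 1))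
     else if fst u < 0 \<and> snd u = int (length \<alpha>) then (Some False, None)
     else (None, None))"

text \<open>Pointwise limit of the iterates (each cell is eventually constant).\<close>
definition c_inf :: "nat list \<Rightarrow> config" where
  "c_inf \<alpha> u = (THE v. \<exists>n0. \<forall>n\<ge>n0. (F ^^ n) (c0 \<alpha>) u = v)"

text \<open>Trit value of a defined cell: 0 -> 0, 0bar -> 1, 1 -> 1, 1bar -> 2.\<close>
definition trit_val :: "state \<Rightarrow> nat" where
  "trit_val st = bitn (fst st) + bitn (snd st)"

text \<open>Base-3' value of the vertical word in column x, rows y0 < y <= ytop
  (northmost most significant, row y0+1 is digit 0).\<close>
definition col_val :: "config \<Rightarrow> int \<Rightarrow> int \<Rightarrow> int \<Rightarrow> nat" where
  "col_val C x y0 ytop = (\<Sum>y\<in>{y0<..ytop}. trit_val (C (x, y)) * 3 ^ nat (y - y0 - 1))"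

end

theory Submission
  imports Defs
begin

text \<open>Every iterate of the automaton satisfies an invariant saying that each row below the input
  is a ripple-carry adder: a sum bit is the parity of the two sum bits above it and the carry of
  the north-eastern one, a carry is the majority of its own sum bit and the sum bit and carry of
  its eastern neighbour, and a row ends at a cell (0,1) placed by the non-local rule. Each cell
  changes at most twice, so these relations hold in the limit. A row then adds the number N
  written by the sum bits of the row above, west of the anchor column, to 2N; together with the
  trit (sum bit + carry) entering from the anchor column this gives 3N + trit, which is exactly
  the Horner step of the base-3' value of the column. Starting from the top row, whose sum bits
  are all 0, induction down the rows gives the theorem.\<close>

lemma int_exists_last_true:
  fixes P :: "int \<Rightarrow> bool"
  assumes "P a" and "\<not> P b" and "a < b"
  shows "\<exists>c. a \<le> c \<and> c < b \<and> P c \<and> \<not> P (c + 1)"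
proof -
  have "a + 1 \<le> b" using assms(3) by simp
  then show ?thesis using assms(2)
  proof (induction b rule: int_ge_induct)
    case base
    then show ?case using assms(1) by auto
  next
    case (step b)
    show ?case
    proof (cases "P b")
      case True
      then show ?thesis using step.prems step.hyps by (intro exI[of _ b]) auto
    next
      case False
      then show ?thesis using step.IH by fastforce
    qed
  qed
qed

lemma eventually_constant_of_rank:
  fixes s :: "nat \<Rightarrow> 'a" and r :: "'a \<Rightarrow> nat"
  assumes change: "\<And>t. s (Suc t) \<noteq> s t \<Longrightarrow> r (s t) < r (s (Suc t))"
    and bound: "\<And>t. r (s t) \<le> b"
  shows "\<exists>T. \<forall>t\<ge>T. s t = s T"
proof -
  have mono: "r (s t) \<le> r (s t')" if "t \<le> t'" for t t'
    using lift_Suc_mono_le[of "r \<circ> s"] change that by (metis comp_apply order.order_iff_strict)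
  obtain T where T: "\<And>t. r (s t) \<le> r (s T)"
    using ex_has_greatest_nat[of "\<lambda>_. True" 0 "r \<circ> s" "Suc b"] bound by (auto simp: less_Suc_eq_le)
  have "s t = s T" if "T \<le> t" for t
    using that
  proof (induction t rule: dec_induct)
    case (step t)
    have "r (s (Suc t)) \<le> r (s t)" using T[of "Suc t"] mono[OF step.hyps(1)] by simp
    then have "s (Suc t) = s t" using change not_less by blast
    then show ?case using step.IH by simp
  qed simp
  then show ?thesis by blast
qed

definition bin_val :: "(int \<Rightarrow> nat) \<Rightarrow> int \<Rightarrow> int \<Rightarrow> nat" where
  "bin_val f K x0 = (\<Sum>x\<in>{K..<x0}. f x * 2 ^ nat (x0 - 1 - x))"

lemma bin_val_empty: "bin_val f K K = 0"
  by (simp add: bin_val_def)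

lemma bin_val_snoc:
  assumes "K \<le> x0"
  shows "bin_val f K (x0+1) = 2 * bin_val f K x0 + f x0"
proof -
  have "{K..<x0+1} = insert x0 {K..<x0}" using assms by auto
  then have "bin_val f K (x0+1) = f x0 + (\<Sum>x\<in>{K..<x0}. f x * 2 ^ nat (x0 - x))"
    by (simp add: bin_val_def)
  also have "(\<Sum>x\<in>{K..<x0}. f x * 2 ^ nat (x0 - x)) =
      (\<Sum>x\<in>{K..<x0}. 2 * (f x * 2 ^ nat (x0 - 1 - x)))"
  proof (rule sum.cong)
    fix x assume "x \<in> {K..<x0}"
    then have "nat (x0 - x) = Suc (nat (x0 - 1 - x))" by auto
    then show "f x * 2 ^ nat (x0 - x) = 2 * (f x * 2 ^ nat (x0 - 1 - x))" by simp
  qed simp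
  finally show ?thesis by (simp add: bin_val_def sum_distrib_left)
qed

lemma bin_val_leading_zeros:
  assumes "K \<le> K1" and "K1 \<le> x0" and "\<And>x. K \<le> x \<Longrightarrow> x < K1 \<Longrightarrow> f x = 0"
  shows "bin_val f K x0 = bin_val f K1 x0"
proof -
  have "{K..<x0} = {K..<K1} \<union> {K1..<x0}" using assms(1,2) by auto
  then have "bin_val f K x0 = (\<Sum>x\<in>{K..<K1}. f x * 2 ^ nat (x0 - 1 - x)) + bin_val f K1 x0"
    unfolding bin_val_def by (simp add: sum.union_disjoint ivl_disj_int)
  then show ?thesis using assms(3) by simp
qed

text \<open>A row of full adders fed with the bits of a number and with the same bits shifted by one
  place computes three times that number, plus the bit and carry entering at the east end.\<close>

lemma bin_val_ripple_carry:
  assumes adder: "\<And>x. K \<le> x \<Longrightarrow> x < x0 \<Longrightarrow> s' x + 2 * c x = s x + s (x+1) + c (x+1)"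
    and "s K = 0" and "c K = 0" and "K \<le> x0"
  shows "bin_val s' K x0 = 3 * bin_val s K x0 + s x0 + c x0"
  using assms(4,1)
proof (induction x0 rule: int_ge_induct)
  case base
  then show ?case using assms(2,3) by (simp add: bin_val_empty)
next
  case (step x)
  have IH: "bin_val s' K x = 3 * bin_val s K x + s x + c x"
    using step.IH step.prems by simp
  have "bin_val s' K (x+1) = 2 * bin_val s' K x + s' x" by (rule bin_val_snoc[OF step.hyps(1)])
  also have "\<dots> = 3 * (2 * bin_val s K x + s x) + s (x+1) + c (x+1)"
    using IH step.prems[of x] step.hyps by simp
  also have "\<dots> = 3 * bin_val s K (x+1) + s (x+1) + c (x+1)"
    using bin_val_snoc[OF step.hyps(1), of s] by simp
  finally show ?case .
qed

lemma bitn_le_1: "bitn b \<le> 1"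
  by (simp add: bitn_def split: option.splits bool.splits)

lemma bitn_Some: "bitn (Some b) = (if b then 1 else 0)"
  by (simp add: bitn_def)

lemma full_adder_bits: "(S::nat) \<le> 3 \<Longrightarrow> bitn (Some (odd S)) + 2 * bitn (Some (2 \<le> S)) = S"
  by (auto simp: bitn_Some, presburger+)

lemma sum_ones_eq_bin_val:
  assumes "K \<le> x0" and "\<And>x. x < K \<Longrightarrow> g x \<noteq> Some True"
  shows "finite {x. x < x0 \<and> g x = Some True}"
    and "(\<Sum>x\<in>{x. x < x0 \<and> g x = Some True}. (2::nat) ^ nat (x0 - 1 - x)) =
      bin_val (\<lambda>x. bitn (g x)) K x0"
proof -
  have ones: "{x. x < x0 \<and> g x = Some True} = {x\<in>{K..<x0}. g x = Some True}"
    using assms by (force simp: not_le[symmetric])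
  then show "finite {x. x < x0 \<and> g x = Some True}"
    by (metis (no_types, lifting) finite_atLeastLessThan_int finite_subset mem_Collect_eq subsetI)
  have "bin_val (\<lambda>x. bitn (g x)) K x0 =
      (\<Sum>x\<in>{K..<x0}. if g x = Some True then (2::nat) ^ nat (x0 - 1 - x) else 0)"
    unfolding bin_val_def by (rule sum.cong) (auto simp: bitn_def split: option.splits)
  also have "\<dots> = (\<Sum>x\<in>{x\<in>{K..<x0}. g x = Some True}. (2::nat) ^ nat (x0 - 1 - x))"
    by (rule sum.inter_filter[symmetric]) simp
  finally show "(\<Sum>x\<in>{x. x < x0 \<and> g x = Some True}. (2::nat) ^ nat (x0 - 1 - x)) =
      bin_val (\<lambda>x. bitn (g x)) K x0"
    unfolding ones by simp
qed

lemma col_val_top: "col_val C x n n = 0"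
  by (simp add: col_val_def)

lemma col_val_below:
  assumes "y < n"
  shows "col_val C x y n = trit_val (C (x,y+1)) + 3 * col_val C x (y+1) n"
proof -
  have "{y<..n} = insert (y+1) {y+1<..n}" using assms by auto
  then have "col_val C x y n =
      trit_val (C (x,y+1)) + (\<Sum>y'\<in>{y+1<..n}. trit_val (C (x, y')) * 3 ^ nat (y' - y - 1))"
    unfolding col_val_def by simp
  also have "(\<Sum>y'\<in>{y+1<..n}. trit_val (C (x, y')) * 3 ^ nat (y' - y - 1)) =
      (\<Sum>y'\<in>{y+1<..n}. 3 * (trit_val (C (x, y')) * 3 ^ nat (y' - (y+1) - 1)))"
  proof (rule sum.cong)
    fix y' assume "y' \<in> {y+1<..n}"
    then have "nat (y' - y - 1) = Suc (nat (y' - (y+1) - 1))" by auto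
    then show "trit_val (C (x, y')) * 3 ^ nat (y' - y - 1) =
        3 * (trit_val (C (x, y')) * 3 ^ nat (y' - (y+1) - 1))"
      by simp
  qed simp
  finally show ?thesis by (simp add: col_val_def sum_distrib_left)
qed

section \<open>The rules cell by cell\<close>

definition vacant :: "state \<Rightarrow> bool" where
  "vacant st \<longleftrightarrow> st = (Some False, None) \<or> st = (None, None)"

definition fires :: "config \<Rightarrow> int \<Rightarrow> int \<Rightarrow> bool" where
  "fires C x y \<longleftrightarrow> C (x-1,y) = (Some True, None) \<and> (\<forall>x'\<ge>x. vacant (C (x',y)))"

definition adder_carry :: "state \<Rightarrow> state \<Rightarrow> bool" where
  "adder_carry a b \<longleftrightarrow> bitn (fst a) + bitn (fst b) + bitn (snd b) \<ge> 2"

definition adder_sum :: "state \<Rightarrow> state \<Rightarrow> bool" where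
  "adder_sum a b \<longleftrightarrow> odd (bitn (fst a) + bitn (fst b) + bitn (snd b))"

lemma nonlocal_step_cell:
  "nonlocal_step C (x,y) = (if fires C x y then (Some False, Some True) else C (x,y))"
proof -
  have east: "(\<forall>i::int. i \<ge> 1 \<longrightarrow> C (cadd (x,y) (cscale i dirE)) \<in> {(Some False, None), (None, None)})
      \<longleftrightarrow> (\<forall>x'>x. vacant (C (x',y)))"
  proof
    assume "\<forall>i::int. i \<ge> 1 \<longrightarrow> C (cadd (x,y) (cscale i dirE)) \<in> {(Some False, None), (None, None)}"
    then have "vacant (C (x + i, y))" if "i \<ge> 1" for i
      using that by (simp add: cadd_def cscale_def dirE_def vacant_def)
    then show "\<forall>x'>x. vacant (C (x',y))"
    proof (intro allI impI)
      fix x' :: int assume "x' > x"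
      then show "vacant (C (x',y))" using \<open>\<And>i. i \<ge> 1 \<Longrightarrow> vacant (C (x + i, y))\<close>[of "x' - x"] by simp
    qed
  qed (simp add: cadd_def cscale_def dirE_def vacant_def)
  have "(\<forall>x'\<ge>x. vacant (C (x',y))) \<longleftrightarrow> vacant (C (x,y)) \<and> (\<forall>x'>x. vacant (C (x',y)))"
    by (auto simp: order_le_less)
  with east show ?thesis
    unfolding nonlocal_step_def fires_def
    by (simp add: cadd_def dirW_def vacant_def)
qed

lemma local_step_cell: "local_step C' (x,y) =
  (if half_defined (C' (x,y)) \<and> is_defined (C' (x+1,y))
   then (fst (C' (x,y)), Some (adder_carry (C' (x,y)) (C' (x+1,y))))
   else if C' (x,y) = (None,None) \<and> half_defined (C' (x,y+1)) \<and> is_defined (C' (x+1,y+1))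
   then (Some (adder_sum (C' (x,y+1)) (C' (x+1,y+1))), None) else C' (x,y))"
  unfolding local_step_def adder_carry_def adder_sum_def cadd_def dirE_def dirN_def by simp

lemma vacant_not_defined: "vacant st \<Longrightarrow> \<not> is_defined st"
  unfolding vacant_def is_defined_def by auto

lemma nonlocal_step_defined: "is_defined (C (x,y)) \<Longrightarrow> nonlocal_step C (x,y) = C (x,y)"
  by (auto simp: nonlocal_step_cell fires_def dest: vacant_not_defined)

lemma F_nonlocal_step_defined:
  "is_defined (nonlocal_step C (x,y)) \<Longrightarrow> F C (x,y) = nonlocal_step C (x,y)"
  by (auto simp: F_def local_step_cell half_defined_def is_defined_def)

lemma F_defined: "is_defined (C (x,y)) \<Longrightarrow> F C (x,y) = C (x,y)"
  using nonlocal_step_defined F_nonlocal_step_defined by metis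

lemma F_fires: "fires C x y \<Longrightarrow> F C (x,y) = (Some False, Some True)"
  by (subst F_nonlocal_step_defined) (auto simp: nonlocal_step_cell is_defined_def)

lemma F_fst: "fst (C (x,y)) \<noteq> None \<Longrightarrow> fst (F C (x,y)) = fst (C (x,y))"
  by (auto simp: F_def local_step_cell nonlocal_step_cell fires_def vacant_def)

lemma nonlocal_step_definedD:
  "is_defined (nonlocal_step C (x,y)) \<Longrightarrow> is_defined (C (x,y)) \<or> fires C x y"
  by (auto simp: nonlocal_step_cell split: if_splits)

lemma nonlocal_step_half_definedD:
  "half_defined (nonlocal_step C (x,y)) \<Longrightarrow> nonlocal_step C (x,y) = C (x,y) \<and> \<not> fires C x y"
  by (auto simp: nonlocal_step_cell half_defined_def split: if_splits)

lemma F_carry_rule: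
  "half_defined (nonlocal_step C (x,y)) \<Longrightarrow> is_defined (nonlocal_step C (x+1,y)) \<Longrightarrow>
   F C (x,y) = (fst (nonlocal_step C (x,y)),
     Some (adder_carry (nonlocal_step C (x,y)) (nonlocal_step C (x+1,y))))"
  by (simp add: F_def local_step_cell)

lemma F_sum_rule:
  "\<not> fires C x y \<Longrightarrow> C (x,y) = (None,None) \<Longrightarrow> half_defined (nonlocal_step C (x,y+1)) \<Longrightarrow>
   is_defined (nonlocal_step C (x+1,y+1)) \<Longrightarrow>
   F C (x,y) = (Some (adder_sum (nonlocal_step C (x,y+1)) (nonlocal_step C (x+1,y+1))), None)"
  by (simp add: F_def local_step_cell nonlocal_step_cell half_defined_def)

lemma F_cases:
  "F C (x,y) = C (x,y) \<or> (fires C x y \<and> F C (x,y) = (Some False, Some True)) \<or>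
   (\<not> fires C x y \<and> half_defined (C (x,y)) \<and> is_defined (nonlocal_step C (x+1,y)) \<and>
      F C (x,y) = (fst (C (x,y)), Some (adder_carry (C (x,y)) (nonlocal_step C (x+1,y))))) \<or>
   (\<not> fires C x y \<and> C (x,y) = (None,None) \<and> half_defined (nonlocal_step C (x,y+1)) \<and>
      is_defined (nonlocal_step C (x+1,y+1)) \<and>
      F C (x,y) = (Some (adder_sum (nonlocal_step C (x,y+1)) (nonlocal_step C (x+1,y+1))), None))"
  by (cases "fires C x y")
    (auto simp: F_def local_step_cell nonlocal_step_cell F_fires half_defined_def)

definition rank :: "state \<Rightarrow> nat" where
  "rank st = (if is_defined st then 2 else if fst st \<noteq> None then 1 else 0)"

lemma rank_le_2: "rank st \<le> 2"
  by (simp add: rank_def)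

text \<open>A cell only changes by becoming more defined, so each cell changes at most twice.\<close>

lemma rank_F: "F C u \<noteq> C u \<Longrightarrow> rank (C u) < rank (F C u)"
  using F_cases[of C "fst u" "snd u"]
  by (auto simp: rank_def is_defined_def half_defined_def fires_def vacant_def)

lemma F_half_defined_east_defined:
  assumes h: "half_defined (C (x,y))" and d: "is_defined (C (x+1,y))"
  shows "is_defined (F C (x,y))"
proof (cases "fires C x y")
  case True
  then show ?thesis using F_fires by (simp add: is_defined_def)
next
  case False
  then have "nonlocal_step C (x,y) = C (x,y)" by (simp add: nonlocal_step_cell)
  moreover have "nonlocal_step C (x+1,y) = C (x+1,y)" using nonlocal_step_defined d by metis
  ultimately show ?thesis
    using F_carry_rule[of C x y] h d by (simp add: half_defined_def is_defined_def)
qed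

section \<open>An invariant of the iterates\<close>

abbreviation nrows :: "nat list \<Rightarrow> int" where
  "nrows \<alpha> \<equiv> int (length \<alpha>)"

definition input_cell :: "nat list \<Rightarrow> int \<Rightarrow> int \<Rightarrow> bool" where
  "input_cell \<alpha> x y \<longleftrightarrow> x = 0 \<and> 1 \<le> y \<and> y \<le> nrows \<alpha>"

definition carry_settled :: "config \<Rightarrow> int \<Rightarrow> int \<Rightarrow> bool" where
  "carry_settled C x y \<longleftrightarrow>
     is_defined (C (x+1,y)) \<and> snd (C (x,y)) = Some (adder_carry (C (x,y)) (C (x+1,y)))"

definition terminated :: "config \<Rightarrow> int \<Rightarrow> int \<Rightarrow> bool" where
  "terminated C x y \<longleftrightarrow>
     C (x,y) = (Some False, Some True) \<and> fst (C (x-1,y)) = Some True \<and> (\<forall>x'>x. vacant (C (x',y)))"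

definition sum_settled :: "config \<Rightarrow> int \<Rightarrow> int \<Rightarrow> bool" where
  "sum_settled C x y \<longleftrightarrow>
     is_defined (C (x,y+1)) \<and>
     (is_defined (C (x+1,y+1)) \<longrightarrow> fst (C (x,y)) = Some (adder_sum (C (x,y+1)) (C (x+1,y+1)))) \<and>
     (is_defined (C (x+1,y+1)) \<or> terminated C x y)"

text \<open>The last three clauses are rules (i) and (ii) in the form they hold once they have fired,
  with the exception of the cell that ends a row.\<close>

definition cqca_inv :: "nat list \<Rightarrow> config \<Rightarrow> bool" where
  "cqca_inv \<alpha> C \<longleftrightarrow>
   (\<forall>u. fst (C u) = None \<longrightarrow> snd (C u) = None) \<and>
   (\<forall>x y. (y > nrows \<alpha> \<or> x > 0) \<longrightarrow> C (x,y) = (None,None)) \<and>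
   (\<forall>y. input_cell \<alpha> 0 y \<longrightarrow> C (0,y) = enc_digit \<alpha> (nat (y-1))) \<and>
   (\<forall>y\<le>0. C (0,y) = (None,None) \<or> C (0,y) = (Some False, Some True)) \<and>
   (\<forall>x<0. fst (C (x, nrows \<alpha>)) = Some False) \<and>
   (\<forall>x y. is_defined (C (x,y)) \<and> \<not> input_cell \<alpha> x y \<longrightarrow> carry_settled C x y \<or> terminated C x y) \<and>
   (\<forall>x y. fst (C (x,y)) \<noteq> None \<and> y < nrows \<alpha> \<and> \<not> input_cell \<alpha> x y \<longrightarrow> sum_settled C x y) \<and>
   (\<forall>x y. is_defined (C (x,y+1)) \<and> is_defined (C (x+1,y+1)) \<longrightarrow> fst (C (x,y)) \<noteq> None)"

lemma enc_digit_defined: "is_defined (enc_digit \<alpha> i)"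
  unfolding enc_digit_def is_defined_def by auto

context
  fixes \<alpha> :: "nat list" and C :: config
  assumes inv: "cqca_inv \<alpha> C"
begin

lemma inv_carry_None: "fst (C u) = None \<Longrightarrow> snd (C u) = None"
  using inv unfolding cqca_inv_def by blast

lemma inv_outside: "y > nrows \<alpha> \<or> x > 0 \<Longrightarrow> C (x,y) = (None,None)"
  using inv unfolding cqca_inv_def by blast

lemma inv_input: "input_cell \<alpha> 0 y \<Longrightarrow> C (0,y) = enc_digit \<alpha> (nat (y-1))"
  using inv unfolding cqca_inv_def by blast

lemma inv_origin_column: "y \<le> 0 \<Longrightarrow> C (0,y) = (None,None) \<or> C (0,y) = (Some False, Some True)"
  using inv unfolding cqca_inv_def by blast

lemma inv_top_row: "x < 0 \<Longrightarrow> fst (C (x, nrows \<alpha>)) = Some False"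
  using inv unfolding cqca_inv_def by blast

lemma inv_carry:
  "is_defined (C (x,y)) \<Longrightarrow> \<not> input_cell \<alpha> x y \<Longrightarrow> carry_settled C x y \<or> terminated C x y"
  using inv unfolding cqca_inv_def by blast

lemma inv_sum:
  "fst (C (x,y)) \<noteq> None \<Longrightarrow> y < nrows \<alpha> \<Longrightarrow> \<not> input_cell \<alpha> x y \<Longrightarrow> sum_settled C x y"
  using inv unfolding cqca_inv_def by blast

lemma inv_sum_defined:
  "is_defined (C (x,y+1)) \<Longrightarrow> is_defined (C (x+1,y+1)) \<Longrightarrow> fst (C (x,y)) \<noteq> None"
  using inv unfolding cqca_inv_def by blast

lemma not_fires_outside: "y > nrows \<alpha> \<or> x > 0 \<Longrightarrow> \<not> fires C x y"
proof
  assume out: "y > nrows \<alpha> \<or> x > 0" and "fires C x y"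
  then have west: "C (x-1,y) = (Some True, None)" by (simp add: fires_def)
  show False
  proof (cases "y > nrows \<alpha> \<or> x - 1 > 0")
    case True
    then show ?thesis using inv_outside[of y "x-1"] west by simp
  next
    case False
    then have "x = 1" "y \<le> nrows \<alpha>" using out by auto
    then show ?thesis
      using west inv_origin_column[of y] inv_input[of y] enc_digit_defined[of \<alpha> "nat (y-1)"]
      by (cases "y \<le> 0") (auto simp: input_cell_def is_defined_def)
  qed
qed

lemma nonlocal_step_outside: "y > nrows \<alpha> \<or> x > 0 \<Longrightarrow> nonlocal_step C (x,y) = (None,None)"
  using not_fires_outside inv_outside by (auto simp: nonlocal_step_cell)

lemma F_outside: "y > nrows \<alpha> \<or> x > 0 \<Longrightarrow> F C (x,y) = (None,None)"
  using F_cases[of C x y] inv_outside[of y x] not_fires_outside[of y x]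
    nonlocal_step_outside[of "y+1" x]
  by (auto simp: half_defined_def)

text \<open>East of a sum bit 1 the row above has already terminated, so the sum rule cannot apply there.\<close>

lemma sum_rule_blocked_east:
  assumes west: "fst (C (x-1,y)) = Some True" and x': "x' > x"
  shows "\<not> (half_defined (nonlocal_step C (x',y+1)) \<and> is_defined (nonlocal_step C (x'+1,y+1)))"
proof
  assume h: "half_defined (nonlocal_step C (x',y+1)) \<and> is_defined (nonlocal_step C (x'+1,y+1))"
  then have hc: "half_defined (C (x',y+1))" using nonlocal_step_half_definedD by metis
  then have "x' \<le> 0" using inv_outside[of "y+1" x'] by (force simp: half_defined_def)
  have "y < nrows \<alpha>"
  proof (rule ccontr)
    assume "\<not> y < nrows \<alpha>"
    then show False
      using inv_outside[of y "x-1"] inv_top_row[of "x-1"] west \<open>x' \<le> 0\<close> x' by force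
  qed
  moreover have "\<not> input_cell \<alpha> (x-1) y" using \<open>x' \<le> 0\<close> x' by (simp add: input_cell_def)
  ultimately have "is_defined (C (x,y+1))"
    using inv_sum[of "x-1" y] west by (auto simp: sum_settled_def terminated_def)
  moreover have "\<not> is_defined (C (x',y+1))" using hc by (simp add: half_defined_def is_defined_def)
  ultimately obtain b
    where b: "x \<le> b" "b < x'" "is_defined (C (b,y+1))" "\<not> is_defined (C (b+1,y+1))"
    using int_exists_last_true[of "\<lambda>b. is_defined (C (b,y+1))" x x'] x' by auto
  have "\<not> input_cell \<alpha> b (y+1)" using b \<open>x' \<le> 0\<close> by (auto simp: input_cell_def)
  then have "terminated C b (y+1)" using inv_carry[OF b(3)] b(4) by (auto simp: carry_settled_def)
  then have east: "\<forall>x''>b. vacant (C (x'',y+1))" by (simp add: terminated_def)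
  have "is_defined (C (x'+1,y+1)) \<or> fires C (x'+1) (y+1)" using nonlocal_step_definedD h by blast
  then show False
    using east b(2) vacant_not_defined by (auto simp: fires_def vacant_def)
qed

lemma vacant_east_stays_vacant:
  assumes west: "fst (C (x-1,y)) = Some True"
    and here: "C (x,y) = (Some False, Some True) \<or> vacant (C (x,y))"
    and east: "\<forall>x'>x. vacant (C (x',y))"
    and x': "x' > x"
  shows "vacant (F C (x',y))"
proof -
  have not_fires: "\<not> fires C x' y"
  proof
    assume "fires C x' y"
    then have "C (x'-1,y) = (Some True, None)" by (simp add: fires_def)
    moreover have "C (x'-1,y) = (Some False, Some True) \<or> vacant (C (x'-1,y))"
      using here east x' by (cases "x'-1 = x") auto
    ultimately show False by (auto simp: vacant_def)
  qed
  have "\<not> is_defined (nonlocal_step C (x'+1,y))"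
    using nonlocal_step_definedD[of C "x'+1" y] east x' vacant_not_defined
    by (auto simp: fires_def vacant_def)
  then show ?thesis
    using F_cases[of C x' y] not_fires sum_rule_blocked_east[OF west x'] east x' by auto
qed

lemma terminated_F: "terminated C x y \<Longrightarrow> terminated (F C) x y"
  using vacant_east_stays_vacant[of x y] F_defined[of C x y] F_fst[of C "x-1" y]
  unfolding terminated_def by (auto simp: is_defined_def)

lemma fires_terminated_F: "fires C x y \<Longrightarrow> terminated (F C) x y"
  using F_fires[of C x y] F_fst[of C "x-1" y] vacant_east_stays_vacant[of x y]
  unfolding terminated_def fires_def by auto

lemma F_undefined_east:
  assumes "is_defined (C (x,y))" and "\<not> is_defined (C (x+1,y))"
  shows "\<not> is_defined (F C (x+1,y))"
proof (cases "input_cell \<alpha> x y")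
  case True
  then show ?thesis using F_outside[of y "x+1"] by (simp add: input_cell_def is_defined_def)
next
  case False
  then have "terminated C x y" using inv_carry assms by (auto simp: carry_settled_def)
  then show ?thesis using terminated_F vacant_not_defined by (auto simp: terminated_def)
qed

lemma F_carry_None: "fst (F C u) = None \<Longrightarrow> snd (F C u) = None"
  using F_cases[of C "fst u" "snd u"] inv_carry_None[of u] by (auto simp: half_defined_def)

lemma F_input: "input_cell \<alpha> 0 y \<Longrightarrow> F C (0,y) = enc_digit \<alpha> (nat (y-1))"
  using inv_input F_defined enc_digit_defined by metis

lemma F_origin_column: "y \<le> 0 \<Longrightarrow> F C (0,y) = (None,None) \<or> F C (0,y) = (Some False, Some True)"
  using inv_origin_column[of y] F_cases[of C 0 y] nonlocal_step_outside[of "y+1" 1]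
    F_defined[of C 0 y]
  by (auto simp: half_defined_def is_defined_def)

lemma F_top_row: "x < 0 \<Longrightarrow> fst (F C (x, nrows \<alpha>)) = Some False"
  using inv_top_row F_fst by (metis option.distinct(1))

lemma F_carry_settled:
  assumes d: "is_defined (F C (x,y))" and "\<not> input_cell \<alpha> x y"
  shows "carry_settled (F C) x y \<or> terminated (F C) x y"
proof (cases "is_defined (C (x,y))")
  case True
  then have "carry_settled C x y \<or> terminated C x y" using inv_carry assms(2) by blast
  then show ?thesis
    using F_defined[of C x y] F_defined[of C "x+1" y] True terminated_F
    by (auto simp: carry_settled_def)
next
  case False
  then consider "fires C x y"
    | "half_defined (C (x,y))" "is_defined (nonlocal_step C (x+1,y))"
      "F C (x,y) = (fst (C (x,y)), Some (adder_carry (C (x,y)) (nonlocal_step C (x+1,y))))"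
    using F_cases[of C x y] d by (auto simp: half_defined_def is_defined_def)
  then show ?thesis
  proof cases
    case 1
    then show ?thesis using fires_terminated_F by blast
  next
    case 2
    then show ?thesis using F_nonlocal_step_defined[of C "x+1" y]
      by (auto simp: carry_settled_def adder_carry_def)
  qed
qed

lemma F_sum_settled_persists:
  assumes f: "fst (C (x,y)) \<noteq> None" and y: "y < nrows \<alpha>" and "\<not> input_cell \<alpha> x y"
  shows "sum_settled (F C) x y"
proof -
  have s: "sum_settled C x y" using inv_sum[OF assms] .
  then have dN: "is_defined (C (x,y+1))" by (simp add: sum_settled_def)
  have "F C (x,y+1) = C (x,y+1)" "fst (F C (x,y)) = fst (C (x,y))"
    using F_defined[of C x "y+1", OF dN] F_fst[of C x y, OF f] by simp_all
  moreover have "is_defined (F C (x+1,y+1)) \<longleftrightarrow> is_defined (C (x+1,y+1))"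
    using F_defined[of C "x+1" "y+1"] F_undefined_east[OF dN] by metis
  moreover have "is_defined (C (x+1,y+1)) \<Longrightarrow> F C (x+1,y+1) = C (x+1,y+1)"
    using F_defined by blast
  ultimately show ?thesis using s terminated_F dN by (auto simp: sum_settled_def)
qed

lemma F_sum_settled_fresh:
  assumes c: "C (x,y) = (None,None)" and f: "fst (F C (x,y)) \<noteq> None"
    and y: "y < nrows \<alpha>" and "\<not> input_cell \<alpha> x y"
  shows "sum_settled (F C) x y"
proof -
  consider "fires C x y"
    | "half_defined (nonlocal_step C (x,y+1))" "is_defined (nonlocal_step C (x+1,y+1))"
      "F C (x,y) = (Some (adder_sum (nonlocal_step C (x,y+1)) (nonlocal_step C (x+1,y+1))), None)"
    using F_cases[of C x y] c f by (auto simp: half_defined_def)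
  then show ?thesis
  proof cases
    case 1
    then have west: "C (x-1,y) = (Some True, None)" by (simp add: fires_def)
    have "\<not> input_cell \<alpha> (x-1) y"
    proof
      assume "input_cell \<alpha> (x-1) y"
      then have "C (x-1,y) = enc_digit \<alpha> (nat (y-1))" using inv_input by (simp add: input_cell_def)
      then show False
        using west enc_digit_defined[of \<alpha> "nat (y-1)"] by (metis is_defined_def snd_conv)
    qed
    then have dN: "is_defined (C (x,y+1))"
      using inv_sum[of "x-1" y] west y by (auto simp: sum_settled_def terminated_def)
    have "\<not> is_defined (C (x+1,y+1))" using inv_sum_defined[OF dN] c by auto
    then have "\<not> is_defined (F C (x+1,y+1))" using F_undefined_east[OF dN] by blast
    then show ?thesis
      using F_defined[of C x "y+1", OF dN] dN fires_terminated_F[OF 1]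
      by (simp add: sum_settled_def)
  next
    case 2
    then have "F C (x+1,y+1) = nonlocal_step C (x+1,y+1)"
      and "F C (x,y+1) = (fst (nonlocal_step C (x,y+1)),
        Some (adder_carry (nonlocal_step C (x,y+1)) (nonlocal_step C (x+1,y+1))))"
      using F_nonlocal_step_defined F_carry_rule by blast+
    then show ?thesis
      using 2 by (auto simp: sum_settled_def is_defined_def half_defined_def adder_sum_def)
  qed
qed

lemma F_sum_settled:
  assumes "fst (F C (x,y)) \<noteq> None" and "y < nrows \<alpha>" and "\<not> input_cell \<alpha> x y"
  shows "sum_settled (F C) x y"
proof (cases "fst (C (x,y)) = None")
  case True
  then have "C (x,y) = (None,None)" using inv_carry_None[of "(x,y)"] by (simp add: prod_eq_iff)
  then show ?thesis using F_sum_settled_fresh assms by blast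
next
  case False
  then show ?thesis using F_sum_settled_persists assms(2,3) by blast
qed

lemma F_sum_defined:
  assumes dN: "is_defined (F C (x,y+1))" and dNE: "is_defined (F C (x+1,y+1))"
  shows "fst (F C (x,y)) \<noteq> None"
proof (cases "fst (C (x,y)) = None")
  case False
  then show ?thesis using F_fst by metis
next
  case True
  then have c: "C (x,y) = (None,None)" using inv_carry_None[of "(x,y)"] by (simp add: prod_eq_iff)
  show ?thesis
  proof (cases "is_defined (C (x,y+1))")
    case True
    then show ?thesis
      using inv_sum_defined[OF True] c F_undefined_east[OF True] dNE by auto
  next
    case False
    then consider "fires C x (y+1)"
      | "\<not> fires C x (y+1)" "half_defined (C (x,y+1))" "is_defined (nonlocal_step C (x+1,y+1))"
      using F_cases[of C x "y+1"] dN by (auto simp: half_defined_def is_defined_def)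
    then show ?thesis
    proof cases
      case 1
      then show ?thesis
        using fires_terminated_F dNE vacant_not_defined by (auto simp: terminated_def)
    next
      case 2
      then have "half_defined (nonlocal_step C (x,y+1))" by (simp add: nonlocal_step_cell)
      then show ?thesis
        using F_fires[of C x y] F_sum_rule[of C x y, OF _ c] 2 by (cases "fires C x y") auto
    qed
  qed
qed

lemma cqca_inv_F: "cqca_inv \<alpha> (F C)"
  unfolding cqca_inv_def
  by (intro conjI allI impI)
    (simp_all add: F_carry_None F_outside F_input F_origin_column F_top_row
      F_carry_settled F_sum_settled F_sum_defined)

end

section \<open>The limit configuration\<close>

lemma c0_cell: "c0 \<alpha> (x,y) = (if input_cell \<alpha> x y then enc_digit \<alpha> (nat (y - 1))
     else if x < 0 \<and> y = nrows \<alpha> then (Some False, None) else (None, None))"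
  by (simp add: c0_def input_cell_def)

lemma cqca_inv_c0: "cqca_inv \<alpha> (c0 \<alpha>)"
proof -
  have defined: "input_cell \<alpha> x y" if "is_defined (c0 \<alpha> (x,y))" for x y
    using that by (auto simp: c0_cell is_defined_def split: if_splits)
  have no_sum: "\<not> (fst (c0 \<alpha> (x,y)) \<noteq> None \<and> y < nrows \<alpha> \<and> \<not> input_cell \<alpha> x y)" for x y
    by (auto simp: c0_cell split: if_splits)
  have no_pair: "\<not> (is_defined (c0 \<alpha> (x,y+1)) \<and> is_defined (c0 \<alpha> (x+1,y+1)))" for x y
    using defined[of x "y+1"] defined[of "x+1" "y+1"] by (auto simp: input_cell_def)
  have "\<forall>u. fst (c0 \<alpha> u) = None \<longrightarrow> snd (c0 \<alpha> u) = None"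
    by (auto simp: c0_cell enc_digit_def split: if_splits)
  moreover have "\<forall>x y. y > nrows \<alpha> \<or> x > 0 \<longrightarrow> c0 \<alpha> (x,y) = (None,None)"
    by (auto simp: c0_cell input_cell_def)
  moreover have "\<forall>y. input_cell \<alpha> 0 y \<longrightarrow> c0 \<alpha> (0,y) = enc_digit \<alpha> (nat (y-1))"
    by (simp add: c0_cell)
  moreover have "\<forall>y\<le>0. c0 \<alpha> (0,y) = (None,None) \<or> c0 \<alpha> (0,y) = (Some False, Some True)"
    by (simp add: c0_cell input_cell_def)
  moreover have "\<forall>x<0. fst (c0 \<alpha> (x, nrows \<alpha>)) = Some False"
    by (simp add: c0_cell input_cell_def)
  moreover have "\<forall>x y. is_defined (c0 \<alpha> (x,y)) \<and> \<not> input_cell \<alpha> x y \<longrightarrow>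
      carry_settled (c0 \<alpha>) x y \<or> terminated (c0 \<alpha>) x y"
    using defined by blast
  moreover have "\<forall>x y. fst (c0 \<alpha> (x,y)) \<noteq> None \<and> y < nrows \<alpha> \<and> \<not> input_cell \<alpha> x y \<longrightarrow>
      sum_settled (c0 \<alpha>) x y"
    using no_sum by blast
  moreover have "\<forall>x y. is_defined (c0 \<alpha> (x,y+1)) \<and> is_defined (c0 \<alpha> (x+1,y+1)) \<longrightarrow>
      fst (c0 \<alpha> (x,y)) \<noteq> None"
    using no_pair by blast
  ultimately show ?thesis
    unfolding cqca_inv_def by (intro conjI)
qed

definition cqca :: "nat list \<Rightarrow> nat \<Rightarrow> config" where
  "cqca \<alpha> t = (F ^^ t) (c0 \<alpha>)"

lemma cqca_Suc: "cqca \<alpha> (Suc t) = F (cqca \<alpha> t)"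
  by (simp add: cqca_def)

lemma cqca_inv_cqca: "cqca_inv \<alpha> (cqca \<alpha> t)"
  by (induction t) (simp_all add: cqca_def cqca_inv_c0 cqca_inv_F)

lemma eventually_cqca_preserved:
  assumes "\<And>C. cqca_inv \<alpha> C \<Longrightarrow> P C \<Longrightarrow> P (F C)" and "P (cqca \<alpha> t)"
  shows "\<forall>\<^sub>F t' in sequentially. P (cqca \<alpha> t')"
proof (rule eventually_sequentiallyI)
  show "P (cqca \<alpha> t')" if "t \<le> t'" for t'
    using that by (induction t' rule: dec_induct)
      (simp_all add: assms cqca_Suc cqca_inv_cqca)
qed

lemma c_inf_eqI:
  assumes "\<forall>\<^sub>F t in sequentially. cqca \<alpha> t u = v"
  shows "c_inf \<alpha> u = v"
  unfolding c_inf_def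
proof (rule the_equality)
  show "\<exists>n0. \<forall>n\<ge>n0. (F ^^ n) (c0 \<alpha>) u = v"
    using assms by (simp add: cqca_def eventually_sequentially)
next
  fix w
  assume "\<exists>n0. \<forall>n\<ge>n0. (F ^^ n) (c0 \<alpha>) u = w"
  then have "\<forall>\<^sub>F t in sequentially. cqca \<alpha> t u = w"
    by (simp add: cqca_def eventually_sequentially)
  with assms have "\<forall>\<^sub>F t in sequentially. w = v"
    by eventually_elim simp
  then show "w = v" by simp
qed

lemma eventually_cqca_eq_c_inf: "\<forall>\<^sub>F t in sequentially. cqca \<alpha> t u = c_inf \<alpha> u"
proof -
  have "rank (cqca \<alpha> t u) < rank (cqca \<alpha> (Suc t) u)" if "cqca \<alpha> (Suc t) u \<noteq> cqca \<alpha> t u" for t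
    using that unfolding cqca_Suc by (rule rank_F)
  from eventually_constant_of_rank[of "\<lambda>t. cqca \<alpha> t u" rank 2, OF this rank_le_2]
  obtain T where T: "\<forall>t\<ge>T. cqca \<alpha> t u = cqca \<alpha> T u" ..
  then have "\<forall>\<^sub>F t in sequentially. cqca \<alpha> t u = cqca \<alpha> T u"
    unfolding eventually_sequentially by blast
  moreover from this have "c_inf \<alpha> u = cqca \<alpha> T u" by (rule c_inf_eqI)
  ultimately show ?thesis by simp
qed

lemma cqca_agrees_with_c_inf:
  assumes "finite U"
  obtains T where "\<And>u. u \<in> U \<Longrightarrow> cqca \<alpha> T u = c_inf \<alpha> u"
proof -
  have "\<forall>\<^sub>F t in sequentially. \<forall>u\<in>U. cqca \<alpha> t u = c_inf \<alpha> u"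
    by (rule eventually_ball_finite[OF assms]) (simp add: eventually_cqca_eq_c_inf)
  from eventually_happens'[OF sequentially_bot this]
  obtain T where "\<forall>u\<in>U. cqca \<alpha> T u = c_inf \<alpha> u" ..
  then show ?thesis using that by blast
qed

lemma c_inf_eq_defined: "is_defined (cqca \<alpha> t (x,y)) \<Longrightarrow> c_inf \<alpha> (x,y) = cqca \<alpha> t (x,y)"
  by (rule c_inf_eqI, rule eventually_cqca_preserved[where P = "\<lambda>C. C (x,y) = cqca \<alpha> t (x,y)"])
    (simp_all add: F_defined)

lemma c_inf_fst_eq:
  assumes "fst (cqca \<alpha> t (x,y)) \<noteq> None"
  shows "fst (c_inf \<alpha> (x,y)) = fst (cqca \<alpha> t (x,y))"
proof -
  have "\<forall>\<^sub>F t' in sequentially. fst (cqca \<alpha> t' (x,y)) = fst (cqca \<alpha> t (x,y))"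
    by (rule eventually_cqca_preserved) (simp_all add: F_fst assms)
  then have "\<forall>\<^sub>F t' in sequentially. fst (c_inf \<alpha> (x,y)) = fst (cqca \<alpha> t (x,y))"
    using eventually_cqca_eq_c_inf[of \<alpha> "(x,y)"] by eventually_elim simp
  then show ?thesis by simp
qed

lemma c_inf_input: "input_cell \<alpha> 0 y \<Longrightarrow> c_inf \<alpha> (0,y) = enc_digit \<alpha> (nat (y-1))"
  using c_inf_eq_defined[of \<alpha> 0 0 y] inv_input[OF cqca_inv_cqca[of \<alpha> 0]] enc_digit_defined by metis

lemma c_inf_outside: "y > nrows \<alpha> \<or> x > 0 \<Longrightarrow> c_inf \<alpha> (x,y) = (None,None)"
  by (rule c_inf_eqI) (simp add: inv_outside[OF cqca_inv_cqca])

lemma c_inf_top_row: "x < 0 \<Longrightarrow> fst (c_inf \<alpha> (x, nrows \<alpha>)) = Some False"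
  using c_inf_fst_eq[of \<alpha> 0 x "nrows \<alpha>"] inv_top_row[OF cqca_inv_cqca[of \<alpha> 0]] by simp

lemma c_inf_carry:
  assumes d: "is_defined (c_inf \<alpha> (x,y))" and "\<not> input_cell \<alpha> x y"
  shows "carry_settled (c_inf \<alpha>) x y \<or> (\<forall>x'>x. \<not> is_defined (c_inf \<alpha> (x',y)))"
proof -
  obtain T where T: "\<And>u. u \<in> {(x,y), (x+1,y)} \<Longrightarrow> cqca \<alpha> T u = c_inf \<alpha> u"
    using cqca_agrees_with_c_inf[of "{(x,y), (x+1,y)}"] by blast
  then have "carry_settled (cqca \<alpha> T) x y \<or> terminated (cqca \<alpha> T) x y"
    using inv_carry[OF cqca_inv_cqca] assms by simp
  then show ?thesis
  proof
    assume "carry_settled (cqca \<alpha> T) x y"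
    then show ?thesis using T[of "(x,y)"] T[of "(x+1,y)"] by (simp add: carry_settled_def)
  next
    assume "terminated (cqca \<alpha> T) x y"
    then have ev: "\<forall>\<^sub>F t in sequentially. terminated (cqca \<alpha> t) x y"
      by (rule eventually_cqca_preserved[rotated]) (rule terminated_F)
    have "\<not> is_defined (c_inf \<alpha> (x',y))" if "x' > x" for x'
    proof -
      obtain t where "terminated (cqca \<alpha> t) x y" "cqca \<alpha> t (x',y) = c_inf \<alpha> (x',y)"
        using eventually_happens'[OF sequentially_bot
            eventually_conj[OF ev eventually_cqca_eq_c_inf]] by blast
      then show ?thesis using that vacant_not_defined by (metis terminated_def)
    qed
    then show ?thesis by simp
  qed
qed

lemma c_inf_sum:
  assumes "fst (c_inf \<alpha> (x,y)) \<noteq> None" and "y < nrows \<alpha>" and "\<not> input_cell \<alpha> x y"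
  shows "is_defined (c_inf \<alpha> (x,y+1)) \<and>
    (is_defined (c_inf \<alpha> (x+1,y+1)) \<longrightarrow>
      fst (c_inf \<alpha> (x,y)) = Some (adder_sum (c_inf \<alpha> (x,y+1)) (c_inf \<alpha> (x+1,y+1))))"
proof -
  obtain T where T: "\<And>u. u \<in> {(x,y), (x,y+1), (x+1,y+1)} \<Longrightarrow> cqca \<alpha> T u = c_inf \<alpha> u"
    using cqca_agrees_with_c_inf[of "{(x,y), (x,y+1), (x+1,y+1)}"] by blast
  then show ?thesis
    using inv_sum[OF cqca_inv_cqca, of \<alpha> T x y] assms by (simp add: sum_settled_def)
qed

lemma c_inf_sum_defined:
  assumes "is_defined (c_inf \<alpha> (x,y+1))" and "is_defined (c_inf \<alpha> (x+1,y+1))"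
  shows "fst (c_inf \<alpha> (x,y)) \<noteq> None"
proof -
  obtain T where T: "\<And>u. u \<in> {(x,y), (x,y+1), (x+1,y+1)} \<Longrightarrow> cqca \<alpha> T u = c_inf \<alpha> u"
    using cqca_agrees_with_c_inf[of "{(x,y), (x,y+1), (x+1,y+1)}"] by blast
  then show ?thesis using inv_sum_defined[OF cqca_inv_cqca, of \<alpha> T x y] assms by simp
qed

lemma c_inf_defined_of_east:
  assumes f: "fst (c_inf \<alpha> (x,y)) \<noteq> None" and d: "is_defined (c_inf \<alpha> (x+1,y))"
  shows "is_defined (c_inf \<alpha> (x,y))"
proof (rule ccontr)
  assume nd: "\<not> is_defined (c_inf \<alpha> (x,y))"
  have "\<forall>\<^sub>F t in sequentially. cqca \<alpha> t (x,y) = c_inf \<alpha> (x,y) \<and> cqca \<alpha> t (x+1,y) = c_inf \<alpha> (x+1,y)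
      \<and> cqca \<alpha> (Suc t) (x,y) = c_inf \<alpha> (x,y)"
    using eventually_sequentially_Suc[of "\<lambda>t. cqca \<alpha> t (x,y) = c_inf \<alpha> (x,y)"]
    by (intro eventually_conj eventually_cqca_eq_c_inf) (simp add: eventually_cqca_eq_c_inf)
  then obtain T where T: "cqca \<alpha> T (x,y) = c_inf \<alpha> (x,y)" "cqca \<alpha> T (x+1,y) = c_inf \<alpha> (x+1,y)"
      "cqca \<alpha> (Suc T) (x,y) = c_inf \<alpha> (x,y)"
    using eventually_happens'[OF sequentially_bot] by blast
  have "half_defined (cqca \<alpha> T (x,y))"
    using T(1) f nd by (simp add: half_defined_def is_defined_def)
  then have "is_defined (cqca \<alpha> (Suc T) (x,y))"
    using F_half_defined_east_defined T(2) d by (simp add: cqca_Suc)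
  then show False using T(3) nd by simp
qed

lemma c_inf_defined_north:
  assumes d: "is_defined (c_inf \<alpha> (x,y))" and y: "y < nrows \<alpha>"
  shows "is_defined (c_inf \<alpha> (x,y+1))"
proof (cases "input_cell \<alpha> x y")
  case True
  then have "input_cell \<alpha> 0 (y+1)" "x = 0" using y by (auto simp: input_cell_def)
  then show ?thesis using c_inf_input enc_digit_defined by metis
next
  case False
  then show ?thesis using c_inf_sum[OF _ y False] d by (simp add: is_defined_def)
qed

lemma c_inf_defined_region: "is_defined (c_inf \<alpha> (x,y)) \<Longrightarrow> y \<le> nrows \<alpha> \<and> x \<le> 0"
  using c_inf_outside[of \<alpha> y x] by (force simp: is_defined_def)

lemma c_inf_defined_west:
  assumes "is_defined (c_inf \<alpha> (x,y))"
  shows "is_defined (c_inf \<alpha> (x-1,y))"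
proof -
  have "y \<le> nrows \<alpha>" using c_inf_defined_region assms by blast
  then show ?thesis using assms
  proof (induction y arbitrary: x rule: int_le_induct)
    case base
    then have "fst (c_inf \<alpha> (x-1, nrows \<alpha>)) \<noteq> None"
      using c_inf_defined_region[OF base] c_inf_top_row[of "x-1" \<alpha>] by simp
    then show ?case using c_inf_defined_of_east base by simp
  next
    case (step y)
    have "is_defined (c_inf \<alpha> (x,y))"
      using c_inf_defined_north[OF step.prems] step.hyps by simp
    then have "is_defined (c_inf \<alpha> (x-1,y))" by (rule step.IH)
    then have "fst (c_inf \<alpha> (x-1,y-1)) \<noteq> None"
      using c_inf_sum_defined[of \<alpha> "x-1" "y-1"] \<open>is_defined (c_inf \<alpha> (x,y))\<close> by simp
    then show ?case using c_inf_defined_of_east step.prems by simp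
  qed
qed

lemma c_inf_defined_westward:
  assumes "is_defined (c_inf \<alpha> (x0,y))" and "x \<le> x0"
  shows "is_defined (c_inf \<alpha> (x,y))"
  using assms(2,1)
proof (induction x rule: int_le_induct)
  case (step x)
  then show ?case using c_inf_defined_west by blast
qed

lemma c_inf_defined_northward:
  assumes "is_defined (c_inf \<alpha> (x,y0))" and "y0 \<le> y" and "y \<le> nrows \<alpha>"
  shows "is_defined (c_inf \<alpha> (x,y))"
  using assms(2,3)
proof (induction y rule: int_ge_induct)
  case (step y)
  then show ?case using c_inf_defined_north by simp
qed (use assms(1) in simp)

section \<open>Rows west of an anchor\<close>

lemma c_inf_full_adder:
  assumes y: "y < nrows \<alpha>" and dN: "is_defined (c_inf \<alpha> (x0,y+1))"
    and dW: "is_defined (c_inf \<alpha> (x0-1,y))" and x: "x < x0"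
  shows "bitn (fst (c_inf \<alpha> (x,y))) + 2 * bitn (snd (c_inf \<alpha> (x,y+1))) =
    bitn (fst (c_inf \<alpha> (x,y+1))) + bitn (fst (c_inf \<alpha> (x+1,y+1))) + bitn (snd (c_inf \<alpha> (x+1,y+1)))"
proof -
  have "x0 \<le> 0" using c_inf_defined_region[OF dN] by simp
  then have input: "\<not> input_cell \<alpha> x y" "\<not> input_cell \<alpha> x (y+1)"
    using x by (simp_all add: input_cell_def)
  have dA: "is_defined (c_inf \<alpha> (x,y+1))" "is_defined (c_inf \<alpha> (x+1,y+1))"
    using c_inf_defined_westward[OF dN] x by simp_all
  have dB: "is_defined (c_inf \<alpha> (x,y))" using c_inf_defined_westward[OF dW] x by simp
  have "snd (c_inf \<alpha> (x,y+1)) = Some (adder_carry (c_inf \<alpha> (x,y+1)) (c_inf \<alpha> (x+1,y+1)))"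
    using c_inf_carry[OF dA(1) input(2)] dN x by (auto simp: carry_settled_def)
  moreover have "fst (c_inf \<alpha> (x,y)) = Some (adder_sum (c_inf \<alpha> (x,y+1)) (c_inf \<alpha> (x+1,y+1)))"
    using c_inf_sum[OF _ y input(1)] dA(2) dB by (simp add: is_defined_def)
  moreover have "bitn (fst (c_inf \<alpha> (x,y+1))) + bitn (fst (c_inf \<alpha> (x+1,y+1)))
      + bitn (snd (c_inf \<alpha> (x+1,y+1))) \<le> 3"
    using bitn_le_1[of "fst (c_inf \<alpha> (x,y+1))"] bitn_le_1[of "fst (c_inf \<alpha> (x+1,y+1))"]
      bitn_le_1[of "snd (c_inf \<alpha> (x+1,y+1))"] by linarith
  ultimately show ?thesis by (simp only: adder_carry_def adder_sum_def full_adder_bits)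
qed

definition west_row_value :: "nat list \<Rightarrow> int \<Rightarrow> int \<Rightarrow> nat \<Rightarrow> bool" where
  "west_row_value \<alpha> x0 y v \<longleftrightarrow> (\<exists>K\<le>x0. (\<forall>x<K. fst (c_inf \<alpha> (x,y)) = Some False) \<and>
     bin_val (\<lambda>x. bitn (fst (c_inf \<alpha> (x,y)))) K x0 = v)"

lemma west_row_value_below:
  assumes y: "y < nrows \<alpha>" and dN: "is_defined (c_inf \<alpha> (x0,y+1))"
    and dW: "is_defined (c_inf \<alpha> (x0-1,y))"
    and above: "west_row_value \<alpha> x0 (y+1) (col_val (c_inf \<alpha>) x0 (y+1) (nrows \<alpha>))"
  shows "west_row_value \<alpha> x0 y (col_val (c_inf \<alpha>) x0 y (nrows \<alpha>))"
proof -
  define s where "s x = bitn (fst (c_inf \<alpha> (x,y+1)))" for x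
  define c where "c x = bitn (snd (c_inf \<alpha> (x,y+1)))" for x
  define s' where "s' x = bitn (fst (c_inf \<alpha> (x,y)))" for x
  obtain K1 where K1: "K1 \<le> x0" "\<And>x. x < K1 \<Longrightarrow> s x = 0"
    and above_value: "bin_val s K1 x0 = col_val (c_inf \<alpha>) x0 (y+1) (nrows \<alpha>)"
    using above unfolding west_row_value_def s_def[abs_def] by (auto simp: bitn_def)
  have adder: "s' x + 2 * c x = s x + s (x+1) + c (x+1)" if "x < x0" for x
    using c_inf_full_adder[OF y dN dW that] by (simp add: s_def c_def s'_def)
  have c0: "c x = 0" if "x + 1 < K1" for x
    using adder[of x] K1 that bitn_le_1[of "snd (c_inf \<alpha> (x+1,y+1))"] by (simp add: c_def)
  \<comment> \<open>West of K1 both summands vanish, so carries vanish from K1 - 1 and sum bits from K1 - 2.\<close>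
  define K where "K = K1 - 2"
  have s'0: "s' x = 0" if "x < K" for x
    using adder[of x] K1 c0[of "x+1"] that by (simp add: K_def)
  have "fst (c_inf \<alpha> (x,y)) = Some False" if "x < K" for x
    using s'0[OF that] c_inf_defined_westward[OF dW, of x] that K1(1)
    by (auto simp: K_def s'_def bitn_def is_defined_def split: bool.splits)
  moreover have "bin_val s' K x0 = 3 * bin_val s K x0 + s x0 + c x0"
    using bin_val_ripple_carry[of K x0 s' c s] adder K1 c0[of K] by (simp add: K_def)
  moreover have "bin_val s K x0 = bin_val s K1 x0"
    using bin_val_leading_zeros[of K K1 x0 s] K1 by (simp add: K_def)
  ultimately show ?thesis
    unfolding west_row_value_def col_val_below[OF y] using K1(1) above_value
    by (intro exI[of _ K]) (simp add: K_def s'_def[symmetric] s_def c_def trit_val_def)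
qed

lemma west_row_value_col_val:
  assumes dN: "is_defined (c_inf \<alpha> (x0,y0+1))" and dW: "is_defined (c_inf \<alpha> (x0-1,y0))"
  shows "west_row_value \<alpha> x0 y0 (col_val (c_inf \<alpha>) x0 y0 (nrows \<alpha>))"
proof -
  have top: "y0 + 1 \<le> nrows \<alpha>" "x0 \<le> 0" using c_inf_defined_region[OF dN] by simp_all
  have "west_row_value \<alpha> x0 y (col_val (c_inf \<alpha>) x0 y (nrows \<alpha>))" if "y0 \<le> y" "y \<le> nrows \<alpha>" for y
    using that(2,1)
  proof (induction y rule: int_le_induct)
    case base
    show ?case
      unfolding west_row_value_def using c_inf_top_row top(2)
      by (intro exI[of _ x0]) (simp add: bin_val_empty col_val_top)
  next
    case (step y)
    have "is_defined (c_inf \<alpha> (x0,y-1+1))"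
      using c_inf_defined_northward[OF dN] step by simp
    moreover have "is_defined (c_inf \<alpha> (x0-1,y-1))"
      using c_inf_defined_northward[OF dW] step by simp
    ultimately show ?case using west_row_value_below[of "y-1"] step by simp
  qed
  then show ?thesis using top by simp
qed

theorem mainTheorem4:
  fixes \<alpha> :: "nat list" and x0 y0 :: int
  assumes "set \<alpha> \<subseteq> {0, 1, 2}"
    and "is_defined (c_inf \<alpha> (cadd (x0, y0) dirN))"
    and "is_defined (c_inf \<alpha> (cadd (x0, y0) dirW))"
  shows "\<exists>z::nat.
     (\<forall>y. y0 < y \<and> y \<le> int (length \<alpha>) \<longrightarrow> is_defined (c_inf \<alpha> (x0, y)))
   \<and> col_val (c_inf \<alpha>) x0 y0 (int (length \<alpha>)) = z
   \<and> (\<forall>x<x0. fst (c_inf \<alpha> (x, y0)) \<noteq> None)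
   \<and> finite {x. x < x0 \<and> fst (c_inf \<alpha> (x, y0)) = Some True}
   \<and> (\<Sum>x\<in>{x. x < x0 \<and> fst (c_inf \<alpha> (x, y0)) = Some True}. (2::nat) ^ nat (x0 - 1 - x)) = z"
proof -
  have dN: "is_defined (c_inf \<alpha> (x0,y0+1))" using assms(2) by (simp add: cadd_def dirN_def)
  have dW: "is_defined (c_inf \<alpha> (x0-1,y0))" using assms(3) by (simp add: cadd_def dirW_def)
  obtain K where K: "K \<le> x0" "\<And>x. x < K \<Longrightarrow> fst (c_inf \<alpha> (x,y0)) = Some False"
    and row_value:
      "bin_val (\<lambda>x. bitn (fst (c_inf \<alpha> (x,y0)))) K x0 = col_val (c_inf \<alpha>) x0 y0 (nrows \<alpha>)"
    using west_row_value_col_val[OF dN dW] unfolding west_row_value_def by blast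
  have "\<forall>y. y0 < y \<and> y \<le> nrows \<alpha> \<longrightarrow> is_defined (c_inf \<alpha> (x0, y))"
    using c_inf_defined_northward[OF dN] by simp
  moreover have "\<forall>x<x0. fst (c_inf \<alpha> (x, y0)) \<noteq> None"
    using c_inf_defined_westward[OF dW] by (simp add: is_defined_def)
  ultimately show ?thesis
    using sum_ones_eq_bin_val[of K x0 "\<lambda>x. fst (c_inf \<alpha> (x,y0))"] K row_value by auto
qed

end
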